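(* Let $(X_n)_{n\ge 0}$ be a discrete-time Markov chain on $\mathbb{R}^d$ with one-step transition densities $p_n(x,y)=p_{n,n+1}(x,y)$ and multi-step transition densities $p_{n,m}(x,y)$, $m\ge n$. Fix $N\in\mathbb{N}$, $y\in\mathbb{R}^d$, and functions $\psi_m:\mathbb{R}^d\times\mathbb{R}^d\to\mathbb{R}_+$, $0\le m<N$, such that for each $m$ and each $z$ the function $q_m(z,\cdot):=p_{N-m-1}(\cdot,z)/\psi_m(z,\cdot)$ is a probability density on $\mathbb{R}^d$. Let $(Y_m,\mathcal{Y}_m)_{0\le m\le N}=(Y^{y;N}_m,\mathcal{Y}^{y;N}_m)_{0\le m\le N}$ be the reverse process with $Y_0=y$, $\mathcal{Y}_0=1$, $\mathbb{P}(Y_{m+1}\in dz'\mid Y_m=z)=q_m(z,z')dz'$ and $\mathcal{Y}_{m+1}=\mathcal{Y}_m\psi_m(Y_m,Y_{m+1})$ for $0\le m<N$. Given a grid $0\le n^\ast<n_1<\cdots<n_l=N$ and setting $n_0:=n^\ast$, $y_l:=y$, it holds for every test function $f:\mathbb{R}^{d\times l}\to\mathbb{R}$ (e.g. bounded measurable) that $$\mathbb{E}\left[f\left(Y_{n_l-n_0},Y_{n_l-n_1},\ldots,Y_{n_l-n_{l-1}}\right)\mathcal{Y}_{n_l-n_0}\right]=\int_{\mathbb{R}^{d\times l}}f(y_0,y_1,\ldots,y_{l-1})\prod_{i=1}^{l}p_{n_{i-1},n_i}(y_{i-1},y_i)\,dy_{i-1}.$$ *)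

theory Defs
  imports "HOL-Probability.Probability"
begin

text \<open>Multi-step transition densities obtained from the one-step densities
  p n x y = p_{n,n+1}(x,y) by Chapman--Kolmogorov:
  mdens_aux p n k x y = p_{n,n+k+1}(x,y).\<close>
primrec mdens_aux ::
  "(nat \<Rightarrow> real^'d \<Rightarrow> real^'d \<Rightarrow> real) \<Rightarrow> nat \<Rightarrow> nat \<Rightarrow> real^'d \<Rightarrow> real^'d \<Rightarrow> ennreal" where
  "mdens_aux p n 0 x y = ennreal (p n x y)"
| "mdens_aux p n (Suc k) x y =
     (\<integral>\<^sup>+ z. mdens_aux p n k x z * ennreal (p (n + Suc k) z y) \<partial>lborel)"

definition trans_dens ::
  "(nat \<Rightarrow> real^'d \<Rightarrow> real^'d \<Rightarrow> real) \<Rightarrow> nat \<Rightarrow> nat \<Rightarrow> real^'d \<Rightarrow> real^'d \<Rightarrow> ennreal" where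
  "trans_dens p n m x y = mdens_aux p n (m - n - 1) x y"

definition rev_kernel ::
  "(nat \<Rightarrow> real^'d \<Rightarrow> real^'d \<Rightarrow> real) \<Rightarrow> (nat \<Rightarrow> real^'d \<Rightarrow> real^'d \<Rightarrow> real) \<Rightarrow> nat
     \<Rightarrow> nat \<Rightarrow> real^'d \<Rightarrow> real^'d \<Rightarrow> real" where
  "rev_kernel p \<psi> N m z x = p (N - m - 1) x z / \<psi> m z x"

definition rev_weight ::
  "(nat \<Rightarrow> real^'d \<Rightarrow> real^'d \<Rightarrow> real) \<Rightarrow> (nat \<Rightarrow> 'a \<Rightarrow> real^'d) \<Rightarrow> nat \<Rightarrow> 'a \<Rightarrow> real" where
  "rev_weight \<psi> Y m \<omega> = (\<Prod>k<m. \<psi> k (Y k \<omega>) (Y (Suc k) \<omega>))"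

end

theory Submission
  imports Defs
begin

text \<open>
  A weighted reverse step is a forward step in disguise: since q_m(z,x) \<psi>_m(z,x) = p_{N-m-1}(x,z),
  integrating out Y_{m+1} against the accumulated weight replaces the reverse kernel by the forward
  density p_{N-m-1}(\<cdot>, Y_m). Iterating, with Chapman--Kolmogorov, the n_{j+1} - n_j reverse steps
  between two grid points produce the factor p_{n_j,n_{j+1}}, and Fubini inserts the new coordinate
  into the product measure; a backward induction along the grid gives the formula. Neither p nor q
  needs to be normalised.
\<close>

lemma measurable_PiM_lborel[simp]:
  "measurable (PiM I (\<lambda>_. lborel :: 'b::euclidean_space measure)) K = measurable (PiM I (\<lambda>_. borel)) K"
  by (intro measurable_cong_sets sets_PiM_cong refl sets_lborel)

lemma measurable_mdens_aux:
  assumes [measurable]: "\<And>k. (\<lambda>(x, z). p k x z) \<in> borel_measurable (borel \<Otimes>\<^sub>M borel)"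
  shows "(\<lambda>(x, z). mdens_aux p n k x z) \<in> borel_measurable (borel \<Otimes>\<^sub>M borel)"
proof (induction k)
  case (Suc k)
  note Suc[measurable]
  show ?case by simp measurable
qed simp

lemma nn_integral_mdens_aux_Suc:
  assumes p_meas[measurable]: "\<And>k. (\<lambda>(x, z). p k x z) \<in> borel_measurable (borel \<Otimes>\<^sub>M borel)"
    and [measurable]: "H \<in> borel_measurable borel"
  shows "(\<integral>\<^sup>+ x. mdens_aux p n (Suc k) x w * H x \<partial>lborel)
    = (\<integral>\<^sup>+ z. ennreal (p (n + Suc k) z w) * (\<integral>\<^sup>+ x. mdens_aux p n k x z * H x \<partial>lborel) \<partial>lborel)"
proof -
  note measurable_mdens_aux[OF p_meas, measurable]
  have "(\<integral>\<^sup>+ x. mdens_aux p n (Suc k) x w * H x \<partial>lborel)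
     = (\<integral>\<^sup>+ x. (\<integral>\<^sup>+ z. ennreal (p (n + Suc k) z w) * (mdens_aux p n k x z * H x) \<partial>lborel) \<partial>lborel)"
    by (simp add: nn_integral_cmult[symmetric] ac_simps)
  also have "\<dots> = (\<integral>\<^sup>+ z. (\<integral>\<^sup>+ x. ennreal (p (n + Suc k) z w) * (mdens_aux p n k x z * H x) \<partial>lborel) \<partial>lborel)"
    by (rule lborel_pair.Fubini'[symmetric]) measurable
  also have "\<dots> = (\<integral>\<^sup>+ z. ennreal (p (n + Suc k) z w) * (\<integral>\<^sup>+ x. mdens_aux p n k x z * H x \<partial>lborel) \<partial>lborel)"
    by (simp add: nn_integral_cmult)
  finally show ?thesis .
qed

locale reverse_chain =
  fixes p :: "nat \<Rightarrow> real^'d \<Rightarrow> real^'d \<Rightarrow> real"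
    and \<psi> :: "nat \<Rightarrow> real^'d \<Rightarrow> real^'d \<Rightarrow> real"
    and N :: nat and M :: "'a measure" and Y :: "nat \<Rightarrow> 'a \<Rightarrow> real^'d"
  assumes p_meas[measurable]: "\<And>k. (\<lambda>(x, z). p k x z) \<in> borel_measurable (borel \<Otimes>\<^sub>M borel)"
    and p_nonneg: "\<And>k x z. p k x z \<ge> 0"
    and psi_meas: "\<And>m. m < N \<Longrightarrow> (\<lambda>(z, x). \<psi> m z x) \<in> borel_measurable (borel \<Otimes>\<^sub>M borel)"
    and psi_nonneg: "\<And>m z x. m < N \<Longrightarrow> \<psi> m z x \<ge> 0"
    and psi_pos: "\<And>m z x. m < N \<Longrightarrow> p (N - m - 1) x z > 0 \<Longrightarrow> \<psi> m z x > 0"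
    and Y_trans: "\<And>m g. m < N \<Longrightarrow>
        case_prod g \<in> borel_measurable (PiM {..m} (\<lambda>_. borel) \<Otimes>\<^sub>M borel) \<Longrightarrow>
        (\<integral>\<^sup>+ \<omega>. g (\<lambda>i\<in>{..m}. Y i \<omega>) (Y (Suc m) \<omega>) \<partial>M) =
        (\<integral>\<^sup>+ \<omega>. (\<integral>\<^sup>+ z. ennreal (rev_kernel p \<psi> N m (Y m \<omega>) z) * g (\<lambda>i\<in>{..m}. Y i \<omega>) z \<partial>lborel) \<partial>M)"
begin

text \<open>Where \<open>\<psi> = 0\<close> the quotient \<open>rev_kernel\<close> is the junk value \<open>0\<close>; \<open>psi_pos\<close> makes \<open>p\<close> vanish there too.\<close>

lemma rev_kernel_mult_psi:
  assumes "m < N"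
  shows "ennreal (rev_kernel p \<psi> N m z x) * ennreal (\<psi> m z x) = ennreal (p (N - m - 1) x z)"
proof (cases "\<psi> m z x = 0")
  case True
  then have "p (N - m - 1) x z = 0"
    using psi_pos[OF assms, of x z] p_nonneg[of "N - m - 1" x z] by linarith
  with True show ?thesis by (simp add: rev_kernel_def)
next
  case False
  then have "\<psi> m z x > 0" using psi_nonneg[OF assms, of z x] by linarith
  then show ?thesis
    using p_nonneg by (simp add: rev_kernel_def ennreal_mult''[symmetric])
qed

lemma rev_weight_nonneg: "m \<le> N \<Longrightarrow> rev_weight \<psi> Y m \<omega> \<ge> 0"
  unfolding rev_weight_def by (intro prod_nonneg) (auto intro: psi_nonneg)

lemma nn_integral_rev_weight_Suc:
  assumes mN: "m < N"
    and G[measurable]: "case_prod G \<in> borel_measurable (PiM {..m} (\<lambda>_. borel) \<Otimes>\<^sub>M borel)"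
  shows "(\<integral>\<^sup>+ \<omega>. G (\<lambda>i\<in>{..m}. Y i \<omega>) (Y (Suc m) \<omega>) * ennreal (rev_weight \<psi> Y (Suc m) \<omega>) \<partial>M)
    = (\<integral>\<^sup>+ \<omega>. (\<integral>\<^sup>+ x. ennreal (p (N - m - 1) x (Y m \<omega>)) * G (\<lambda>i\<in>{..m}. Y i \<omega>) x \<partial>lborel)
          * ennreal (rev_weight \<psi> Y m \<omega>) \<partial>M)"
proof -
  define W where "W u = (\<Prod>k<m. \<psi> k (u k) (u (Suc k)))" for u :: "nat \<Rightarrow> real^'d"
  define g where "g u x = G u x * ennreal (\<psi> m (u m) x) * ennreal (W u)" for u x
  have [measurable]: "(\<lambda>(z, x). \<psi> k z x) \<in> borel_measurable (borel \<Otimes>\<^sub>M borel)" if "k \<le> m" for k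
    using psi_meas that mN by simp
  have [measurable]: "W \<in> borel_measurable (PiM {..m} (\<lambda>_. borel))"
    unfolding W_def by measurable
  have g[measurable]: "case_prod g \<in> borel_measurable (PiM {..m} (\<lambda>_. borel) \<Otimes>\<^sub>M borel)"
    unfolding g_def by measurable
  have W_eq: "W (\<lambda>i\<in>{..m}. Y i \<omega>) = rev_weight \<psi> Y m \<omega>" for \<omega>
    unfolding W_def rev_weight_def by (intro prod.cong) auto
  have kernel_step: "ennreal (rev_kernel p \<psi> N m z x) * g u x = ennreal (p (N - m - 1) x z) * G u x * ennreal (W u)"
    if "u m = z" for u z x
    unfolding g_def rev_kernel_mult_psi[OF mN, symmetric] that by (simp add: ac_simps)
  have "(\<integral>\<^sup>+ \<omega>. G (\<lambda>i\<in>{..m}. Y i \<omega>) (Y (Suc m) \<omega>) * ennreal (rev_weight \<psi> Y (Suc m) \<omega>) \<partial>M)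
      = (\<integral>\<^sup>+ \<omega>. g (\<lambda>i\<in>{..m}. Y i \<omega>) (Y (Suc m) \<omega>) \<partial>M)"
    using psi_nonneg[OF mN] rev_weight_nonneg mN
    by (intro nn_integral_cong) (simp add: g_def W_eq rev_weight_def ennreal_mult ac_simps)
  also have "\<dots> = (\<integral>\<^sup>+ \<omega>. (\<integral>\<^sup>+ x. ennreal (rev_kernel p \<psi> N m (Y m \<omega>) x) * g (\<lambda>i\<in>{..m}. Y i \<omega>) x \<partial>lborel) \<partial>M)"
    by (rule Y_trans[OF mN g])
  also have "\<dots> = (\<integral>\<^sup>+ \<omega>. (\<integral>\<^sup>+ x. ennreal (p (N - m - 1) x (Y m \<omega>)) * G (\<lambda>i\<in>{..m}. Y i \<omega>) x * ennreal (rev_weight \<psi> Y m \<omega>) \<partial>lborel) \<partial>M)"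
    by (intro nn_integral_cong) (simp add: kernel_step W_eq)
  also have "\<dots> = (\<integral>\<^sup>+ \<omega>. (\<integral>\<^sup>+ x. ennreal (p (N - m - 1) x (Y m \<omega>)) * G (\<lambda>i\<in>{..m}. Y i \<omega>) x \<partial>lborel)
          * ennreal (rev_weight \<psi> Y m \<omega>) \<partial>M)"
    by (intro nn_integral_cong nn_integral_multc) measurable
  finally show ?thesis .
qed

lemma nn_integral_rev_weight_add:
  assumes "a + k < N"
    and "case_prod G \<in> borel_measurable (PiM {..a} (\<lambda>_. borel) \<Otimes>\<^sub>M borel)"
  shows "(\<integral>\<^sup>+ \<omega>. G (\<lambda>i\<in>{..a}. Y i \<omega>) (Y (Suc (a + k)) \<omega>) * ennreal (rev_weight \<psi> Y (Suc (a + k)) \<omega>) \<partial>M)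
    = (\<integral>\<^sup>+ \<omega>. (\<integral>\<^sup>+ x. mdens_aux p (N - Suc (a + k)) k x (Y a \<omega>) * G (\<lambda>i\<in>{..a}. Y i \<omega>) x \<partial>lborel)
          * ennreal (rev_weight \<psi> Y a \<omega>) \<partial>M)"
  using assms
proof (induction k arbitrary: a G)
  \<comment> \<open>the reverse step at \<open>a\<close> supplies the last forward step in the recursion of \<open>mdens_aux\<close>\<close>
  case 0
  have "N - Suc (a + 0) = N - a - 1" by simp
  with 0 show ?case
    by (simp only: add_0_right mdens_aux.simps(1)) (rule nn_integral_rev_weight_Suc)
next
  case (Suc k)
  note G[measurable] = Suc.prems(2)
  note measurable_mdens_aux[OF p_meas, measurable]
  define n0 where "n0 = N - Suc (a + Suc k)"
  define H where "H u z = (\<integral>\<^sup>+ x. mdens_aux p n0 k x z * G u x \<partial>lborel)" for u z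
  have [measurable]: "case_prod H \<in> borel_measurable (PiM {..a} (\<lambda>_. borel) \<Otimes>\<^sub>M borel)"
    unfolding H_def by measurable
  have restrict_G: "(\<lambda>(u, x). G (restrict u {..a}) x) \<in> borel_measurable (PiM {..Suc a} (\<lambda>_. borel) \<Otimes>\<^sub>M borel)"
    by measurable
  have restrict_path: "restrict (\<lambda>i\<in>{..Suc a}. Y i \<omega>) {..a} = (\<lambda>i\<in>{..a}. Y i \<omega>)" for \<omega>
    by (auto simp: fun_eq_iff)
  have "(\<integral>\<^sup>+ \<omega>. G (\<lambda>i\<in>{..a}. Y i \<omega>) (Y (Suc (a + Suc k)) \<omega>) * ennreal (rev_weight \<psi> Y (Suc (a + Suc k)) \<omega>) \<partial>M)
      = (\<integral>\<^sup>+ \<omega>. (\<integral>\<^sup>+ x. mdens_aux p n0 k x (Y (Suc a) \<omega>) * G (\<lambda>i\<in>{..a}. Y i \<omega>) x \<partial>lborel)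
          * ennreal (rev_weight \<psi> Y (Suc a) \<omega>) \<partial>M)"
    using Suc.IH[of "Suc a", OF _ restrict_G, unfolded restrict_path] Suc.prems(1) by (simp add: n0_def restrict_def)
  also have "\<dots> = (\<integral>\<^sup>+ \<omega>. H (\<lambda>i\<in>{..a}. Y i \<omega>) (Y (Suc a) \<omega>) * ennreal (rev_weight \<psi> Y (Suc a) \<omega>) \<partial>M)"
    by (simp add: H_def)
  also have "\<dots> = (\<integral>\<^sup>+ \<omega>. (\<integral>\<^sup>+ z. ennreal (p (N - a - 1) z (Y a \<omega>)) * H (\<lambda>i\<in>{..a}. Y i \<omega>) z \<partial>lborel)
          * ennreal (rev_weight \<psi> Y a \<omega>) \<partial>M)"
    using Suc.prems(1) by (intro nn_integral_rev_weight_Suc) auto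
  also have "\<dots> = (\<integral>\<^sup>+ \<omega>. (\<integral>\<^sup>+ x. mdens_aux p n0 (Suc k) x (Y a \<omega>) * G (\<lambda>i\<in>{..a}. Y i \<omega>) x \<partial>lborel)
          * ennreal (rev_weight \<psi> Y a \<omega>) \<partial>M)"
  proof -
    have "n0 + Suc k = N - a - 1" using Suc.prems(1) by (simp add: n0_def)
    then show ?thesis
      by (simp add: H_def nn_integral_mdens_aux_Suc[OF p_meas] del: mdens_aux.simps)
  qed
  finally show ?case unfolding n0_def .
qed

end

locale reverse_chain_grid = reverse_chain p \<psi> N M Y
  for p :: "nat \<Rightarrow> real^'d \<Rightarrow> real^'d \<Rightarrow> real" and \<psi> N and M :: "'a measure" and Y +
  fixes y :: "real^'d" and l :: nat and n :: "nat \<Rightarrow> nat"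
  assumes M_prob: "prob_space M"
    and Y_0: "\<And>\<omega>. \<omega> \<in> space M \<Longrightarrow> Y 0 \<omega> = y"
    and grid: "\<And>i. i < l \<Longrightarrow> n i < n (Suc i)"
    and grid_end: "n l = N"
begin

definition grid_point :: "(nat \<Rightarrow> real^'d) \<Rightarrow> nat \<Rightarrow> real^'d" where
  "grid_point ys i = (if i = l then y else ys i)"

definition path_dens :: "nat \<Rightarrow> (nat \<Rightarrow> real^'d) \<Rightarrow> ennreal" where
  "path_dens j ys = (\<Prod>i\<in>{Suc j..l}. trans_dens p (n (i - 1)) (n i) (ys (i - 1)) (grid_point ys i))"

lemma grid_mono: "i \<le> i' \<Longrightarrow> i' \<le> l \<Longrightarrow> n i \<le> n i'"
proof (induction i' rule: dec_induct)
  case (step m)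
  then show ?case using grid[of m] by simp
qed simp

lemma measurable_path_dens[measurable]:
  "path_dens j \<in> borel_measurable (PiM {j..<l} (\<lambda>_. borel))"
proof -
  note measurable_mdens_aux[OF p_meas, measurable]
  have grid_point: "(\<lambda>ys. grid_point ys i) \<in> borel_measurable (PiM {j..<l} (\<lambda>_. borel))"
    if "i \<in> {Suc j..l}" for i
    using that by (cases "i = l") (auto simp: grid_point_def)
  show ?thesis unfolding path_dens_def trans_dens_def by measurable (auto intro: grid_point)
qed

lemma path_dens_Suc:
  assumes "j < l"
  shows "path_dens j ys = trans_dens p (n j) (n (Suc j)) (ys j) (grid_point ys (Suc j)) * path_dens (Suc j) ys"
proof -
  have "{Suc j..l} = insert (Suc j) {Suc (Suc j)..l}" using assms by auto
  then show ?thesis by (simp add: path_dens_def)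
qed

lemma path_dens_fun_upd: "path_dens (Suc j) (ys(j := x)) = path_dens (Suc j) ys"
  unfolding path_dens_def grid_point_def by (intro prod.cong) auto

lemma grid_point_fun_upd: "i \<noteq> j \<Longrightarrow> grid_point (ys(j := x)) i = grid_point ys i"
  by (simp add: grid_point_def)

lemma measurable_grid_kernel:
  assumes j: "j < l" and f[measurable]: "f \<in> borel_measurable (PiM {j..<l} (\<lambda>_. borel))"
  shows "(\<lambda>(ys, x). trans_dens p (n j) (n (Suc j)) x (grid_point ys (Suc j)) * f (ys(j := x)))
      \<in> borel_measurable (PiM {Suc j..<l} (\<lambda>_. borel) \<Otimes>\<^sub>M lborel)"
proof -
  note measurable_mdens_aux[OF p_meas, measurable]
  have "{j..<l} = {Suc j..<l} \<union> {j}" using j by auto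
  note measurable_fun_upd[OF this, measurable]
  have [measurable]: "(\<lambda>ys. grid_point ys (Suc j)) \<in> borel_measurable (PiM {Suc j..<l} (\<lambda>_. borel))"
    using j by (cases "Suc j = l") (auto simp: grid_point_def)
  show ?thesis unfolding trans_dens_def by measurable
qed

lemma nn_integral_path_dens_insert:
  assumes j: "j < l" and f[measurable]: "f \<in> borel_measurable (PiM {j..<l} (\<lambda>_. borel))"
  shows "(\<integral>\<^sup>+ ys. (\<integral>\<^sup>+ x. trans_dens p (n j) (n (Suc j)) x (grid_point ys (Suc j)) * f (ys(j := x)) \<partial>lborel)
            * path_dens (Suc j) ys \<partial>PiM {Suc j..<l} (\<lambda>_. lborel))
       = (\<integral>\<^sup>+ ys. f ys * path_dens j ys \<partial>PiM {j..<l} (\<lambda>_. lborel))"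
proof -
  interpret product_sigma_finite "\<lambda>_::nat. lborel :: (real^'d) measure"
    by (simp add: product_sigma_finite_def sigma_finite_lborel)
  have ins: "{j..<l} = insert j {Suc j..<l}" using j by auto
  have "(\<integral>\<^sup>+ ys. (\<integral>\<^sup>+ x. trans_dens p (n j) (n (Suc j)) x (grid_point ys (Suc j)) * f (ys(j := x)) \<partial>lborel)
            * path_dens (Suc j) ys \<partial>PiM {Suc j..<l} (\<lambda>_. lborel))
      = (\<integral>\<^sup>+ ys. (\<integral>\<^sup>+ x. f (ys(j := x)) * path_dens j (ys(j := x)) \<partial>lborel) \<partial>PiM {Suc j..<l} (\<lambda>_. lborel))"
  proof (intro nn_integral_cong)
    fix ys assume "ys \<in> space (PiM {Suc j..<l} (\<lambda>_. lborel :: (real^'d) measure))"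
    then have ys: "ys \<in> space (PiM {Suc j..<l} (\<lambda>_. borel))" by (simp add: space_PiM)
    have "f (ys(j := x)) * path_dens j (ys(j := x))
        = trans_dens p (n j) (n (Suc j)) x (grid_point ys (Suc j)) * f (ys(j := x)) * path_dens (Suc j) ys" for x
      using j by (simp add: path_dens_Suc path_dens_fun_upd grid_point_fun_upd ac_simps)
    moreover have "(\<lambda>x. trans_dens p (n j) (n (Suc j)) x (grid_point ys (Suc j)) * f (ys(j := x))) \<in> borel_measurable lborel"
      using measurable_Pair2[OF measurable_grid_kernel[OF j f] ys] by simp
    ultimately show "(\<integral>\<^sup>+ x. trans_dens p (n j) (n (Suc j)) x (grid_point ys (Suc j)) * f (ys(j := x)) \<partial>lborel) * path_dens (Suc j) ys
        = (\<integral>\<^sup>+ x. f (ys(j := x)) * path_dens j (ys(j := x)) \<partial>lborel)"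
      by (simp add: nn_integral_multc)
  qed
  also have "\<dots> = (\<integral>\<^sup>+ ys. f ys * path_dens j ys \<partial>PiM {j..<l} (\<lambda>_. lborel))"
  proof -
    have "(\<lambda>ys. f ys * path_dens j ys) \<in> borel_measurable (PiM (insert j {Suc j..<l}) (\<lambda>_. lborel))"
      unfolding ins[symmetric] by simp measurable
    then show ?thesis
      unfolding ins by (rule product_nn_integral_insert[symmetric, rotated 2]) auto
  qed
  finally show ?thesis .
qed

lemma nn_integral_grid_step:
  assumes j: "j < l" and f[measurable]: "f \<in> borel_measurable (PiM {j..<l} (\<lambda>_. borel))"
  shows "(\<integral>\<^sup>+ \<omega>. f (\<lambda>i\<in>{j..<l}. Y (N - n i) \<omega>) * ennreal (rev_weight \<psi> Y (N - n j) \<omega>) \<partial>M)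
    = (\<integral>\<^sup>+ \<omega>. (\<integral>\<^sup>+ x. trans_dens p (n j) (n (Suc j)) x (Y (N - n (Suc j)) \<omega>)
                    * f ((\<lambda>i\<in>{Suc j..<l}. Y (N - n i) \<omega>)(j := x)) \<partial>lborel)
         * ennreal (rev_weight \<psi> Y (N - n (Suc j)) \<omega>) \<partial>M)"
proof -
  define a where "a = N - n (Suc j)"
  define k where "k = n (Suc j) - n j - 1"
  have "n j < n (Suc j)" "n (Suc j) \<le> N"
    using grid[OF j] grid_mono[of "Suc j" l] j grid_end by auto
  then have ak: "Suc (a + k) = N - n j" "a + k < N" "N - Suc (a + k) = n j"
    unfolding a_def k_def by auto
  have prefix_times: "N - n i \<le> a" if "i \<in> {Suc j..<l}" for i
    using grid_mono[of "Suc j" i] that unfolding a_def by auto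
  define G where "G u x = f ((\<lambda>i\<in>{Suc j..<l}. u (N - n i))(j := x))" for u :: "nat \<Rightarrow> real^'d" and x
  have "{j..<l} = {Suc j..<l} \<union> {j}" using j by auto
  note measurable_fun_upd[OF this, measurable]
  have [measurable]: "case_prod G \<in> borel_measurable (PiM {..a} (\<lambda>_. borel) \<Otimes>\<^sub>M borel)"
    unfolding G_def by measurable (use prefix_times in auto)
  have path_split_at_a: "f (\<lambda>i\<in>{j..<l}. Y (N - n i) \<omega>) = G (\<lambda>i\<in>{..a}. Y i \<omega>) (Y (Suc (a + k)) \<omega>)" for \<omega>
    unfolding G_def using prefix_times ak(1) j by (intro arg_cong[where f = f] ext) auto
  have path_restrict_prefix: "G (\<lambda>i\<in>{..a}. Y i \<omega>) x = f ((\<lambda>i\<in>{Suc j..<l}. Y (N - n i) \<omega>)(j := x))" for \<omega> x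
    using prefix_times unfolding G_def by (intro arg_cong[where f = f] ext) auto
  have "(\<integral>\<^sup>+ \<omega>. f (\<lambda>i\<in>{j..<l}. Y (N - n i) \<omega>) * ennreal (rev_weight \<psi> Y (N - n j) \<omega>) \<partial>M)
      = (\<integral>\<^sup>+ \<omega>. G (\<lambda>i\<in>{..a}. Y i \<omega>) (Y (Suc (a + k)) \<omega>) * ennreal (rev_weight \<psi> Y (Suc (a + k)) \<omega>) \<partial>M)"
    by (simp only: path_split_at_a ak(1))
  also have "\<dots> = (\<integral>\<^sup>+ \<omega>. (\<integral>\<^sup>+ x. mdens_aux p (N - Suc (a + k)) k x (Y a \<omega>) * G (\<lambda>i\<in>{..a}. Y i \<omega>) x \<partial>lborel)
          * ennreal (rev_weight \<psi> Y a \<omega>) \<partial>M)"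
    by (rule nn_integral_rev_weight_add) (use ak in auto)
  also have "\<dots> = (\<integral>\<^sup>+ \<omega>. (\<integral>\<^sup>+ x. trans_dens p (n j) (n (Suc j)) x (Y (N - n (Suc j)) \<omega>)
                    * f ((\<lambda>i\<in>{Suc j..<l}. Y (N - n i) \<omega>)(j := x)) \<partial>lborel)
         * ennreal (rev_weight \<psi> Y (N - n (Suc j)) \<omega>) \<partial>M)"
    by (simp only: path_restrict_prefix ak(3) trans_dens_def flip: a_def k_def)
  finally show ?thesis .
qed

lemma nn_integral_rev_grid:
  assumes "j \<le> l" and "f \<in> borel_measurable (PiM {j..<l} (\<lambda>_. borel))"
  shows "(\<integral>\<^sup>+ \<omega>. f (\<lambda>i\<in>{j..<l}. Y (N - n i) \<omega>) * ennreal (rev_weight \<psi> Y (N - n j) \<omega>) \<partial>M)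
    = (\<integral>\<^sup>+ ys. f ys * path_dens j ys \<partial>PiM {j..<l} (\<lambda>_. lborel))"
  using assms
proof (induction j arbitrary: f rule: inc_induct)
  case base
  interpret prob_space M by (rule M_prob)
  show ?case
    by (simp add: grid_end rev_weight_def path_dens_def PiM_empty nn_integral_count_space_finite emeasure_space_1)
next
  case (step j)
  note f[measurable] = step.prems
  define f' where "f' ys = (\<integral>\<^sup>+ x. trans_dens p (n j) (n (Suc j)) x (grid_point ys (Suc j)) * f (ys(j := x)) \<partial>lborel)"
    for ys
  have [measurable]: "f' \<in> borel_measurable (PiM {Suc j..<l} (\<lambda>_. borel))"
    using measurable_grid_kernel[OF step.hyps(2) f] unfolding f'_def by measurable
  have endpoint: "Y (N - n (Suc j)) \<omega> = grid_point (\<lambda>i\<in>{Suc j..<l}. Y (N - n i) \<omega>) (Suc j)" if "\<omega> \<in> space M" for \<omega>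
    using Y_0[OF that] grid_end step.hyps by (auto simp: grid_point_def)
  have "(\<integral>\<^sup>+ \<omega>. f (\<lambda>i\<in>{j..<l}. Y (N - n i) \<omega>) * ennreal (rev_weight \<psi> Y (N - n j) \<omega>) \<partial>M)
      = (\<integral>\<^sup>+ \<omega>. f' (\<lambda>i\<in>{Suc j..<l}. Y (N - n i) \<omega>) * ennreal (rev_weight \<psi> Y (N - n (Suc j)) \<omega>) \<partial>M)"
    unfolding nn_integral_grid_step[OF step.hyps(2) f] f'_def by (intro nn_integral_cong) (simp add: endpoint)
  also have "\<dots> = (\<integral>\<^sup>+ ys. f' ys * path_dens (Suc j) ys \<partial>PiM {Suc j..<l} (\<lambda>_. lborel))"
    by (rule step.IH) measurable
  also have "\<dots> = (\<integral>\<^sup>+ ys. f ys * path_dens j ys \<partial>PiM {j..<l} (\<lambda>_. lborel))"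
    unfolding f'_def by (rule nn_integral_path_dens_insert[OF step.hyps(2) f])
  finally show ?case .
qed

end

theorem theorem3:
  fixes p :: "nat \<Rightarrow> real^'d \<Rightarrow> real^'d \<Rightarrow> real"
    and \<psi> :: "nat \<Rightarrow> real^'d \<Rightarrow> real^'d \<Rightarrow> real"
    and N :: nat and y :: "real^'d"
    and M :: "'a measure" and Y :: "nat \<Rightarrow> 'a \<Rightarrow> real^'d"
    and l :: nat and n :: "nat \<Rightarrow> nat"
    and f :: "(nat \<Rightarrow> real^'d) \<Rightarrow> ennreal"
  assumes p_meas: "\<And>k. (\<lambda>(x, z). p k x z) \<in> borel_measurable (borel \<Otimes>\<^sub>M borel)"
    and p_nonneg: "\<And>k x z. p k x z \<ge> 0"
    and p_dens: "\<And>k x. (\<integral>\<^sup>+ z. ennreal (p k x z) \<partial>lborel) = 1"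
    and psi_meas: "\<And>m. m < N \<Longrightarrow> (\<lambda>(z, x). \<psi> m z x) \<in> borel_measurable (borel \<Otimes>\<^sub>M borel)"
    and psi_nonneg: "\<And>m z x. m < N \<Longrightarrow> \<psi> m z x \<ge> 0"
    and psi_pos: "\<And>m z x. m < N \<Longrightarrow> p (N - m - 1) x z > 0 \<Longrightarrow> \<psi> m z x > 0"
    and q_dens: "\<And>m z. m < N \<Longrightarrow>
                   (\<integral>\<^sup>+ x. ennreal (rev_kernel p \<psi> N m z x) \<partial>lborel) = 1"
    and M_prob: "prob_space M"
    and Y_meas: "\<And>m. m \<le> N \<Longrightarrow> Y m \<in> borel_measurable M"
    and Y_0: "\<And>\<omega>. \<omega> \<in> space M \<Longrightarrow> Y 0 \<omega> = y"
    and Y_trans: "\<And>m g. m < N \<Longrightarrow>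
        case_prod g \<in> borel_measurable (PiM {..m} (\<lambda>_. borel) \<Otimes>\<^sub>M borel) \<Longrightarrow>
        (\<integral>\<^sup>+ \<omega>. g (\<lambda>i\<in>{..m}. Y i \<omega>) (Y (Suc m) \<omega>) \<partial>M) =
        (\<integral>\<^sup>+ \<omega>. (\<integral>\<^sup>+ z. ennreal (rev_kernel p \<psi> N m (Y m \<omega>) z) * g (\<lambda>i\<in>{..m}. Y i \<omega>) z \<partial>lborel) \<partial>M)"
    and l_pos: "l \<ge> 1"
    and grid: "\<And>i. i < l \<Longrightarrow> n i < n (Suc i)"
    and grid_end: "n l = N"
    and f_meas: "f \<in> borel_measurable (PiM {..<l} (\<lambda>_. borel))"
  shows "(\<integral>\<^sup>+ \<omega>. f (\<lambda>i\<in>{..<l}. Y (n l - n i) \<omega>) * ennreal (rev_weight \<psi> Y (n l - n 0) \<omega>) \<partial>M)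
       = (\<integral>\<^sup>+ ys. f ys * (\<Prod>i\<in>{1..l}. trans_dens p (n (i - 1)) (n i) (ys (i - 1))
                                         (if i = l then y else ys i))
            \<partial>PiM {..<l} (\<lambda>_. lborel))"
proof -
  interpret reverse_chain_grid p \<psi> N M Y y l n
    using p_meas p_nonneg psi_meas psi_nonneg psi_pos Y_trans M_prob Y_0 grid grid_end
    by (intro reverse_chain_grid.intro reverse_chain.intro reverse_chain_grid_axioms.intro) blast+
  have "(\<integral>\<^sup>+ \<omega>. f (\<lambda>i\<in>{0..<l}. Y (N - n i) \<omega>) * ennreal (rev_weight \<psi> Y (N - n 0) \<omega>) \<partial>M)
      = (\<integral>\<^sup>+ ys. f ys * path_dens 0 ys \<partial>PiM {0..<l} (\<lambda>_. lborel))"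
    using f_meas by (intro nn_integral_rev_grid) (auto simp: atLeast0LessThan)
  then show ?thesis
    by (simp add: atLeast0LessThan grid_end path_dens_def grid_point_def)
qed

end
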